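(* Let $m\ge 3$ be an integer. Then $m=[z\,y_k\,x_k\,\dots\,y_2\,x_2\,y_1\,x_1]_{\boldsymbol b}$ for some integer $k\ge0$ and integers $x_i,y_i,z$ satisfying: $0\le x_i<q^{2i-1}-1$ for all $1\le i\le k$; $0\le y_i<2p$ for all $1\le i\le k$; $\{y_i-2,y_i-1,y_i\}\subset A+A+A$ for all $1\le i\le k$; and $3\le z\le 6pq^{2k+1}$.
   Context: Fix a prime $p$ and a set $A\subset\{1,\dots,\lfloor p/2\rfloor-1\}$ such that $A\cap(A+A+\{0,1\})=\emptyset$ and $A+A+A$ contains $p+2$ consecutive integers. Let $q>100p$ be a prime power. Let $\boldsymbol b=(b_1,b_2,\dots)$ with $b_i=q^i-1$ for $i$ odd and $b_i=p$ for $i$ even, and for arbitrary integers $x_1,\dots,x_n$ write $[x_n\,\dots\,x_1]_{\boldsymbol b}:=x_1+x_2b_1+x_3b_1b_2+\dots+x_nb_1\cdots b_{n-1}$ (so the $(2i-1)$-th digit has weight $b_1\cdots b_{2i-2}$ and the $2i$-th digit has weight $b_1\cdots b_{2i-1}$). *)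

theory Defs
  imports "HOL-Number_Theory.Number_Theory"
begin

definition sumset :: "int set \<Rightarrow> int set \<Rightarrow> int set" where
  "sumset X Y = {a + c | a c. a \<in> X \<and> c \<in> Y}"

definition bseq :: "nat \<Rightarrow> nat \<Rightarrow> nat \<Rightarrow> int" where
  "bseq p q i = (if odd i then int q ^ i - 1 else int p)"

text \<open>Mixed-radix value [x_n ... x_1]_b of the digit list [x_1, ..., x_n]
  (least significant digit first): the digit at list position j (0-based,
  i.e. the (j+1)-th digit) has weight b_1 * ... * b_j.\<close>
definition bval :: "(nat \<Rightarrow> int) \<Rightarrow> int list \<Rightarrow> int" where
  "bval b xs = (\<Sum>j<length xs. xs ! j * (\<Prod>t\<in>{1..j}. b t))"

end

theory Submission
  imports Defs
begin

text \<open>Write \<open>M = x\<^sub>1 + (q - 1) M'\<close> with \<open>0 \<le> x\<^sub>1 < q - 1\<close>, pick the digit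
  \<open>y\<^sub>1 \<equiv> M' (mod p)\<close> among the \<open>y < 2p\<close> with \<open>y - 2, y - 1, y \<in> A + A + A\<close>, and continue
  with \<open>(M' - y\<^sub>1) / p\<close> in the shifted base \<open>b\<^sub>3, b\<^sub>4, \<dots>\<close>, stopping as soon as the remaining
  value is at most \<open>6 p q\<^sup>2\<^sup>k\<^sup>+\<^sup>1\<close>. Such digits exist for every residue because \<open>A + A + A\<close>
  contains \<open>p + 2\<close> consecutive integers, all lying in \<open>[3, 3p/2)\<close>.\<close>

lemma bval_Cons: "bval b (a # xs) = a + b 1 * bval (\<lambda>t. b (Suc t)) xs"
proof -
  have prod_shift: "(\<Prod>t\<in>{1..Suc j}. b t) = b 1 * (\<Prod>t\<in>{1..j}. b (Suc t))" for j
  proof -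
    have "{1..Suc j} = insert 1 {Suc 1..Suc j}" by auto
    then have "(\<Prod>t\<in>{1..Suc j}. b t) = b 1 * (\<Prod>t\<in>{Suc 1..Suc j}. b t)" by simp
    then show ?thesis by (simp only: prod.shift_bounds_cl_Suc_ivl)
  qed
  have "bval b (a # xs) = a + (\<Sum>j<length xs. xs ! j * (\<Prod>t\<in>{1..Suc j}. b t))"
    unfolding bval_def length_Cons by (subst sum.lessThan_Suc_shift) simp
  also have "\<dots> = a + (\<Sum>j<length xs. xs ! j * (b 1 * (\<Prod>t\<in>{1..j}. b (Suc t))))"
    by (simp only: prod_shift)
  also have "\<dots> = a + b 1 * bval (\<lambda>t. b (Suc t)) xs"
    by (simp add: bval_def sum_distrib_left mult_ac)
  finally show ?thesis .
qed

lemma bval_singleton [simp]: "bval b [z] = z"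
  by (simp add: bval_def)

lemma ball_atLeastAtMost_Suc_split:
  "(\<forall>i\<in>{1..Suc k}. P i) \<longleftrightarrow> P 1 \<and> (\<forall>i\<in>{1..k}. P (Suc i))"
proof -
  have "{1..Suc k} = insert 1 (Suc ` {1..k})"
    by (auto simp: image_iff)
  then show ?thesis by (simp only: ball_simps)
qed

text \<open>\<open>has_expansion p q S j M\<close>: \<open>M\<close> has an expansion of the required shape in the base
  \<open>b\<^sub>2\<^sub>j\<^sub>+\<^sub>1, b\<^sub>2\<^sub>j\<^sub>+\<^sub>2, \<dots>\<close>, i.e. after \<open>j\<close> digit pairs have already been split off.\<close>
definition has_expansion :: "nat \<Rightarrow> nat \<Rightarrow> int set \<Rightarrow> nat \<Rightarrow> int \<Rightarrow> bool" where
  "has_expansion p q S j M \<longleftrightarrow> (\<exists>(k::nat) (x::nat \<Rightarrow> int) (y::nat \<Rightarrow> int) (z::int).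
     M = bval (\<lambda>t. bseq p q (t + 2*j)) (concat (map (\<lambda>i. [x i, y i]) [1..<k+1]) @ [z])
     \<and> (\<forall>i\<in>{1..k}. 0 \<le> x i \<and> x i < int q ^ (2*(i+j) - 1) - 1)
     \<and> (\<forall>i\<in>{1..k}. 0 \<le> y i \<and> y i < 2 * int p)
     \<and> (\<forall>i\<in>{1..k}. {y i - 2, y i - 1, y i} \<subseteq> S)
     \<and> 3 \<le> z \<and> z \<le> 6 * int p * int q ^ (2*(k+j) + 1))"

lemma has_expansion_leading_digit:
  assumes "3 \<le> M" and "M \<le> 6 * int p * int q ^ (2*j + 1)"
  shows "has_expansion p q S j M"
  unfolding has_expansion_def
  by (intro exI[of _ 0] exI[of _ "\<lambda>_. 0"] exI[of _ M]) (use assms in simp)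

lemma has_expansion_Cons:
  assumes N: "has_expansion p q S (Suc j) N"
    and x0: "0 \<le> x0" "x0 < int q ^ (2*j + 1) - 1"
    and y0: "0 \<le> y0" "y0 < 2 * int p" "{y0 - 2, y0 - 1, y0} \<subseteq> S"
  shows "has_expansion p q S j (x0 + (int q ^ (2*j + 1) - 1) * (y0 + int p * N))"
proof -
  obtain k x y z where
    N_val: "N = bval (\<lambda>t. bseq p q (t + 2*Suc j)) (concat (map (\<lambda>i. [x i, y i]) [1..<k+1]) @ [z])"
    and x: "\<forall>i\<in>{1..k}. 0 \<le> x i \<and> x i < int q ^ (2*(i + Suc j) - 1) - 1"
    and y: "\<forall>i\<in>{1..k}. 0 \<le> y i \<and> y i < 2 * int p"
    and yS: "\<forall>i\<in>{1..k}. {y i - 2, y i - 1, y i} \<subseteq> S"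
    and z: "3 \<le> z" "z \<le> 6 * int p * int q ^ (2*(k + Suc j) + 1)"
    using N unfolding has_expansion_def by blast
  define x' where "x' i = (if i = 1 then x0 else x (i - 1))" for i
  define y' where "y' i = (if i = 1 then y0 else y (i - 1))" for i
  have digits: "concat (map (\<lambda>i. [x' i, y' i]) [1..<Suc k + 1])
      = x0 # y0 # concat (map (\<lambda>i. [x i, y i]) [1..<k+1])"
    by (simp add: upt_conv_Cons map_Suc_upt[symmetric] o_def x'_def y'_def del: upt_Suc)
  have base_shift: "(\<lambda>t. bseq p q (Suc (Suc t) + 2*j)) = (\<lambda>t. bseq p q (t + 2*Suc j))"
    by (simp add: algebra_simps)
  have "bval (\<lambda>t. bseq p q (t + 2*j)) (concat (map (\<lambda>i. [x' i, y' i]) [1..<Suc k + 1]) @ [z])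
      = x0 + bseq p q (1 + 2*j) * (y0 + bseq p q (Suc 1 + 2*j) * N)"
    unfolding digits append_Cons bval_Cons base_shift N_val by simp
  also have "\<dots> = x0 + (int q ^ (2*j + 1) - 1) * (y0 + int p * N)"
    by (simp add: bseq_def)
  finally have "bval (\<lambda>t. bseq p q (t + 2*j)) (concat (map (\<lambda>i. [x' i, y' i]) [1..<Suc k + 1]) @ [z])
      = x0 + (int q ^ (2*j + 1) - 1) * (y0 + int p * N)" .
  moreover have "\<forall>i\<in>{1..Suc k}. 0 \<le> x' i \<and> x' i < int q ^ (2*(i+j) - 1) - 1"
    using x x0 unfolding ball_atLeastAtMost_Suc_split by (simp add: x'_def)
  moreover have "\<forall>i\<in>{1..Suc k}. 0 \<le> y' i \<and> y' i < 2 * int p"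
    using y y0 unfolding ball_atLeastAtMost_Suc_split by (simp add: y'_def)
  moreover have "\<forall>i\<in>{1..Suc k}. {y' i - 2, y' i - 1, y' i} \<subseteq> S"
    using yS y0 unfolding ball_atLeastAtMost_Suc_split by (simp add: y'_def)
  ultimately show ?thesis
    unfolding has_expansion_def using z by (intro exI[of _ "Suc k"] exI[of _ x'] exI[of _ y'] exI[of _ z]) simp
qed

lemma quotient_digit_bounds:
  fixes D p M y :: int
  assumes D: "1 \<le> D" and p: "2 \<le> p" and M: "6 * p * (D + 1) < M"
    and y: "0 \<le> y" "y < 2 * p" and dvd: "p dvd (M div D - y)"
  shows "4 < (M div D - y) div p" and "(M div D - y) div p < M"
proof -
  define N where "N = (M div D - y) div p"
  have M_eq: "M = D * (M div D) + M mod D" by simp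
  have "M mod D < D" using D by simp
  moreover have "D * (6 * p - 1) = 6 * p * D - D" "6 * p * (D + 1) = 6 * p * D + 6 * p"
    by (simp_all add: algebra_simps)
  ultimately have "D * (6 * p - 1) < D * (M div D)"
    using M M_eq p by linarith
  then have quot: "6 * p \<le> M div D" using D by (simp add: mult_less_cancel_left)
  have N_eq: "M div D = y + p * N" unfolding N_def using dvd by simp
  have "p * 4 < p * N" using N_eq quot y by linarith
  then show N4: "4 < (M div D - y) div p" unfolding N_def using p by (simp add: mult_less_cancel_left)
  have "2 * N \<le> p * N" using p N4 unfolding N_def by (intro mult_right_mono) auto
  moreover have "M div D \<le> D * (M div D)"
    using mult_right_mono[of 1 D "M div D"] D quot p by simp
  then have "M div D \<le> M"
    using M_eq pos_mod_sign[of D M] D by linarith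
  ultimately show "(M div D - y) div p < M" using N_eq N4 y unfolding N_def by linarith
qed

lemma has_expansion_of_ge_3:
  assumes digits: "\<And>r. \<exists>y. 0 \<le> y \<and> y < 2 * int p \<and> {y - 2, y - 1, y} \<subseteq> S \<and> [y = r] (mod int p)"
    and p: "2 \<le> p" and q: "2 \<le> q" and M: "3 \<le> M"
  shows "has_expansion p q S j M"
  using M
proof (induction "nat M" arbitrary: M j rule: less_induct)
  case (less M j)
  show ?case
  proof (cases "M \<le> 6 * int p * int q ^ (2*j + 1)")
    case True
    then show ?thesis using less.prems by (rule has_expansion_leading_digit[rotated])
  next
    case False
    define D where "D = int q ^ (2*j + 1) - 1"
    have "int q \<le> int q ^ (2*j + 1)" using q by (simp add: self_le_power)
    then have D1: "1 \<le> D" unfolding D_def using q by linarith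
    obtain y0 where y0: "0 \<le> y0" "y0 < 2 * int p" "{y0 - 2, y0 - 1, y0} \<subseteq> S"
      and y0_cong: "[y0 = M div D] (mod int p)"
      using digits by blast
    define N where "N = (M div D - y0) div int p"
    have dvd: "int p dvd (M div D - y0)"
      using y0_cong by (simp add: cong_iff_dvd_diff dvd_diff_commute)
    have big: "6 * int p * (D + 1) < M" using False unfolding D_def by simp
    have N: "4 < N" "N < M"
      unfolding N_def using quotient_digit_bounds[OF D1 _ big y0(1,2) dvd] p by simp_all
    have "has_expansion p q S (Suc j) N"
      using N by (intro less.hyps) auto
    then have "has_expansion p q S j (M mod D + D * (y0 + int p * N))"
      using D1 y0 unfolding D_def by (intro has_expansion_Cons) simp_all
    moreover have "M = M mod D + D * (y0 + int p * N)"
      unfolding N_def using dvd by simp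
    ultimately show ?thesis by simp
  qed
qed

lemma consecutive_triple_in_residue_class:
  fixes S :: "int set" and c r :: int and p :: nat
  assumes p: "0 < p" and window: "{c .. c + int p + 1} \<subseteq> S"
  obtains y where "c + 2 \<le> y" "y \<le> c + int p + 1" "{y - 2, y - 1, y} \<subseteq> S" "[y = r] (mod int p)"
proof
  let ?y = "c + 2 + (r - c - 2) mod int p"
  have "0 \<le> (r - c - 2) mod int p" "(r - c - 2) mod int p < int p" using p by simp_all
  then show "c + 2 \<le> ?y" "?y \<le> c + int p + 1" "{?y - 2, ?y - 1, ?y} \<subseteq> S"
    using window by auto
  show "[?y = r] (mod int p)" by (simp add: cong_def mod_simps)
qed

lemma sumset3_bounds:
  fixes A :: "int set"
  assumes "A \<subseteq> {1..n}" and "s \<in> sumset (sumset A A) A"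
  shows "3 \<le> s \<and> s \<le> 3 * n"
proof -
  obtain a1 a2 a3 where "s = a1 + a2 + a3" "a1 \<in> A" "a2 \<in> A" "a3 \<in> A"
    using assms(2) unfolding sumset_def by blast
  moreover from this(2-4) have "a1 \<in> {1..n}" "a2 \<in> {1..n}" "a3 \<in> {1..n}"
    using assms(1) by auto
  ultimately show ?thesis by simp
qed

theorem lemma5p1:
  fixes p q :: nat and A :: "int set" and m :: int
  assumes hp: "prime p"
    and hA: "A \<subseteq> {1 .. int p div 2 - 1}"
    and hAfree: "A \<inter> sumset (sumset A A) {0, 1} = {}"
    and hAAA: "\<exists>c. {c .. c + int p + 1} \<subseteq> sumset (sumset A A) A"
    and hq: "primepow q"
    and hq100: "q > 100 * p"
    and hm: "m \<ge> 3"
  shows "\<exists>(k::nat) (x::nat \<Rightarrow> int) (y::nat \<Rightarrow> int) (z::int).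
           m = bval (bseq p q) (concat (map (\<lambda>i. [x i, y i]) [1..<k+1]) @ [z])
         \<and> (\<forall>i\<in>{1..k}. 0 \<le> x i \<and> x i < int q ^ (2*i - 1) - 1)
         \<and> (\<forall>i\<in>{1..k}. 0 \<le> y i \<and> y i < 2 * int p)
         \<and> (\<forall>i\<in>{1..k}. {y i - 2, y i - 1, y i} \<subseteq> sumset (sumset A A) A)
         \<and> 3 \<le> z \<and> z \<le> 6 * int p * int q ^ (2*k + 1)"
proof -
  let ?S = "sumset (sumset A A) A"
  have p: "2 \<le> p" using hp prime_ge_2_nat by blast
  have q: "2 \<le> q" using hq100 p by simp
  obtain c where window: "{c .. c + int p + 1} \<subseteq> ?S" using hAAA by blast
  then have "c \<in> ?S" "c + int p + 1 \<in> ?S" by auto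
  then have c: "3 \<le> c" "c + int p + 1 \<le> 3 * (int p div 2 - 1)"
    using sumset3_bounds[OF hA] by blast+
  have "\<exists>y. 0 \<le> y \<and> y < 2 * int p \<and> {y - 2, y - 1, y} \<subseteq> ?S \<and> [y = r] (mod int p)" for r
  proof -
    obtain y where y: "c + 2 \<le> y" "y \<le> c + int p + 1" "{y - 2, y - 1, y} \<subseteq> ?S" "[y = r] (mod int p)"
      using consecutive_triple_in_residue_class[OF _ window] p by auto
    have "2 * (int p div 2) \<le> int p" by simp
    then have "0 \<le> y" "y < 2 * int p"
      using y(1,2) c by (simp_all add: right_diff_distrib)
    with y(3,4) show ?thesis by blast
  qed
  then have "has_expansion p q ?S 0 m" using p q hm by (rule has_expansion_of_ge_3)
  then show ?thesis unfolding has_expansion_def by simp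
qed

end
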